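(* Let $\ell\in\{-1,1\}^n$, $L=\ell\ell^T$, and $A=\lambda\ell\ell^T/\sqrt n+E$, where $E$ has i.i.d. $N(0,1)$ entries. Let $\kappa$ be a real parameter, $K\ge10^2$ and $\lambda\ge10^2K$. Let $\theta=e^{-\lambda^2/2+3\kappa+2K\lambda}$. Then with probability at least $1-e^{-10\kappa}-2/n^2$, for every $S\subseteq[n]$ with $|S|\ge(1-K/(3\lambda))n$, the matrix $(A\odot L)_{S\times S}$ is resolvable with parameters \[ \Big(0.5K\sqrt n,\ 1.1\sqrt n\Big(\theta+\frac{n-|S|}{n}+\frac{10^4\max(0,\kappa-\lambda)}{n}\Big)\Big). \]
   Context: $\odot$ is the entrywise product, $\langle X,Y\rangle=\sum_{ij}X_{ij}Y_{ij}$, and $M_{S\times S}$ is the submatrix of $M$ indexed by $S\times S$. Resolvability: an $m\times m$ matrix $X$ is $(d_1,d_2)$-resolvable if for all $x_1,\dots,x_m\in[0,1]$ with $\sum_ix_i\le10^{-6}m$ we have $\langle X,Y_x\rangle\ge d_1\sum_ix_i-d_2m$, where $(Y_x)_{ij}=x_i$. *)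

theory Defs
  imports "HOL-Probability.Probability"
begin

definition std_gaussian :: "real measure" where
  "std_gaussian = density lborel std_normal_density"

definition gaussian_matrix_space :: "nat \<Rightarrow> ((nat \<times> nat) \<Rightarrow> real) measure" where
  "gaussian_matrix_space n = PiM ({..<n} \<times> {..<n}) (\<lambda>_. std_gaussian)"

text \<open>Resolvability of the principal submatrix of X indexed by the finite set S
  (an m x m matrix with m = card S): for all x : S -> [0,1] with
  sum x <= 10^-6 m, we have <X_{SxS}, Y_x> >= d1 * sum x - d2 * m,
  where (Y_x)_{ij} = x_i.\<close>
definition resolvable_on :: "nat set \<Rightarrow> (nat \<Rightarrow> nat \<Rightarrow> real) \<Rightarrow> real \<Rightarrow> real \<Rightarrow> bool" where
  "resolvable_on S X d1 d2 \<longleftrightarrow>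
     (\<forall>x :: nat \<Rightarrow> real.
        (\<forall>i\<in>S. 0 \<le> x i \<and> x i \<le> 1) \<and> (\<Sum>i\<in>S. x i) \<le> 10 powr (-6) * real (card S) \<longrightarrow>
        (\<Sum>i\<in>S. \<Sum>j\<in>S. X i j * x i) \<ge> d1 * (\<Sum>i\<in>S. x i) - d2 * real (card S))"

end

theory Submission
  imports Defs
begin

text \<open>Write \<open>Z = E \<odot> L\<close>; its entries are again independent standard Gaussians. On \<open>S \<times> S\<close>
  the signal part of \<open>A \<odot> L\<close> is the constant \<open>\<lambda> / sqrt n\<close>. As the resolvability inequality is
  linear in \<open>x \<in> [0,1]^S\<close>, it can only fail if, for the set \<open>U\<close> of rows where a coefficient has
  the bad sign, the row sums of \<open>Z\<close> over \<open>U \<times> [n]\<close> are very negative or the block sum of \<open>Z\<close>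
  over \<open>U \<times> T\<close> with \<open>T = [n] - S\<close> is very positive. Each of these sums is Gaussian, so a Chernoff bound and a
  union bound over all \<open>U\<close> and \<open>T\<close> bound the failure probabilities by
  \<open>4^n exp (-K n / 3) \<le> 1 / n^2\<close> for the blocks and by \<open>exp (-10 \<kappa>)\<close> for the rows; the slack
  \<open>\<theta> n + 10^4 max 0 (\<kappa> - \<lambda>)\<close> is what pays for the union over the \<open>2^n\<close> row sets.\<close>

lemma prob_space_std_gaussian: "prob_space std_gaussian"
  unfolding std_gaussian_def by (rule prob_space_normal_density) simp

lemma prob_space_gaussian_matrix_space: "prob_space (gaussian_matrix_space n)"
  unfolding gaussian_matrix_space_def by (rule prob_space_PiM) (rule prob_space_std_gaussian)

lemma measurable_gaussian_matrix_entry [measurable]: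
  assumes "p \<in> {..<n} \<times> {..<n}"
  shows "(\<lambda>\<omega>. \<omega> p) \<in> borel_measurable (gaussian_matrix_space n)"
proof -
  have "(\<lambda>\<omega>. \<omega> p) \<in> measurable (gaussian_matrix_space n) std_gaussian"
    unfolding gaussian_matrix_space_def by (rule measurable_component_singleton) (rule assms)
  moreover have "sets std_gaussian = sets borel" unfolding std_gaussian_def by simp
  ultimately show ?thesis using measurable_cong_sets by blast
qed

lemma nn_integral_exp_std_gaussian:
  "(\<integral>\<^sup>+y. ennreal (exp (s * y)) \<partial>std_gaussian) = ennreal (exp (s\<^sup>2 / 2))"
proof -
  have shift: "std_normal_density y * exp (s * y) = exp (s\<^sup>2 / 2) * std_normal_density (y - s)" for y
  proof -
    have "s * y + - y\<^sup>2 / 2 = s\<^sup>2 / 2 + - (y - s)\<^sup>2 / 2" by (simp add: power2_eq_square field_simps)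
    then have "exp (s * y) * exp (- y\<^sup>2 / 2) = exp (s\<^sup>2 / 2) * exp (- (y - s)\<^sup>2 / 2)"
      by (simp only: exp_add[symmetric])
    then show ?thesis unfolding std_normal_density_def by (simp add: algebra_simps)
  qed
  have "(\<integral>\<^sup>+y. ennreal (exp (s * y)) \<partial>std_gaussian)
      = (\<integral>\<^sup>+y. ennreal (std_normal_density y) * ennreal (exp (s * y)) \<partial>lborel)"
    unfolding std_gaussian_def by (subst nn_integral_density) auto
  also have "\<dots> = (\<integral>\<^sup>+y. ennreal (exp (s\<^sup>2 / 2)) * ennreal (std_normal_density (y - s)) \<partial>lborel)"
    by (intro nn_integral_cong) (simp add: shift ennreal_mult'[symmetric])
  also have "\<dots> = ennreal (exp (s\<^sup>2 / 2)) * (\<integral>\<^sup>+y. ennreal (std_normal_density (y - s)) \<partial>lborel)"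
    by (rule nn_integral_cmult) auto
  also have "(\<integral>\<^sup>+y. ennreal (std_normal_density (y - s)) \<partial>lborel) = 1"
    using nn_integral_real_affine[of "\<lambda>y. ennreal (std_normal_density y)" 1 "-s"]
    by (simp add: nn_integral_eq_integral normal_density_nonneg)
  finally show ?thesis by simp
qed

lemma nn_integral_exp_gaussian_matrix_sum:
  fixes P :: "(nat \<times> nat) set" and \<sigma> :: "nat \<times> nat \<Rightarrow> real"
  assumes P: "P \<subseteq> {..<n} \<times> {..<n}"
  shows "(\<integral>\<^sup>+E. ennreal (exp (t * (\<Sum>p\<in>P. \<sigma> p * E p))) \<partial>gaussian_matrix_space n)
       = ennreal (exp (t\<^sup>2 * (\<Sum>p\<in>P. (\<sigma> p)\<^sup>2) / 2))"
proof -
  define I where "I = {..<n} \<times> {..<n}"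
  define \<sigma>' where "\<sigma>' p = (if p \<in> P then \<sigma> p else 0)" for p
  define f where "f p y = ennreal (exp (t * \<sigma>' p * y))" for p and y :: real
  interpret product_sigma_finite "\<lambda>_::nat \<times> nat. std_gaussian"
    unfolding product_sigma_finite_def
    using prob_space_imp_sigma_finite[OF prob_space_std_gaussian] by simp
  have I: "finite I" "P \<subseteq> I" using P unfolding I_def by simp_all
  have f_meas: "f p \<in> borel_measurable std_gaussian" for p
    unfolding f_def std_gaussian_def by simp
  have "t * \<sigma>' p * y = (if p \<in> P then t * \<sigma> p * y else 0)" for p y
    unfolding \<sigma>'_def by simp
  then have "ennreal (exp (t * (\<Sum>p\<in>P. \<sigma> p * E p))) = (\<Prod>p\<in>I. f p (E p))" for E
    using I by (simp add: f_def prod_ennreal exp_sum[symmetric] sum.If_cases Int_absorb1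
        sum_distrib_left mult.assoc)
  then have "(\<integral>\<^sup>+E. ennreal (exp (t * (\<Sum>p\<in>P. \<sigma> p * E p))) \<partial>gaussian_matrix_space n)
      = (\<Prod>p\<in>I. integral\<^sup>N std_gaussian (f p))"
    unfolding gaussian_matrix_space_def I_def[symmetric]
    using product_nn_integral_prod[OF I(1) f_meas] by simp
  also have "\<dots> = (\<Prod>p\<in>I. ennreal (exp ((t * \<sigma>' p)\<^sup>2 / 2)))"
    unfolding f_def by (simp add: nn_integral_exp_std_gaussian)
  also have "\<dots> = ennreal (exp (t\<^sup>2 * (\<Sum>p\<in>P. (\<sigma> p)\<^sup>2) / 2))"
  proof -
    have "(t * \<sigma>' p)\<^sup>2 / 2 = (if p \<in> P then t\<^sup>2 * (\<sigma> p)\<^sup>2 / 2 else 0)" for p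
      unfolding \<sigma>'_def by (simp add: power_mult_distrib)
    then show ?thesis
      using I by (simp add: prod_ennreal exp_sum[symmetric] sum.If_cases Int_absorb1
          sum_distrib_left sum_divide_distrib)
  qed
  finally show ?thesis .
qed

lemma gaussian_matrix_chernoff:
  fixes P :: "(nat \<times> nat) set" and \<sigma> :: "nat \<times> nat \<Rightarrow> real"
  assumes P: "P \<subseteq> {..<n} \<times> {..<n}" and t: "t \<ge> 0"
  shows "measure (gaussian_matrix_space n)
           {\<omega> \<in> space (gaussian_matrix_space n). a \<le> (\<Sum>p\<in>P. \<sigma> p * \<omega> p)}
         \<le> exp (t\<^sup>2 * (\<Sum>p\<in>P. (\<sigma> p)\<^sup>2) / 2 - t * a)"
proof -
  define M where "M = gaussian_matrix_space n"
  define g where "g \<omega> = (\<Sum>p\<in>P. \<sigma> p * \<omega> p)" for \<omega> :: "nat \<times> nat \<Rightarrow> real"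
  interpret M: prob_space M unfolding M_def by (rule prob_space_gaussian_matrix_space)
  have g_meas: "g \<in> borel_measurable M"
    unfolding g_def M_def using P by (intro borel_measurable_sum) auto
  have "emeasure M {\<omega> \<in> space M. a \<le> g \<omega>}
      \<le> (\<integral>\<^sup>+\<omega>. ennreal (exp (- t * a)) * ennreal (exp (t * g \<omega>)) \<partial>M)"
  proof (subst nn_integral_indicator[symmetric], use g_meas in measurable, intro nn_integral_mono)
    fix \<omega>
    have "indicator {\<omega> \<in> space M. a \<le> g \<omega>} \<omega> \<le> ennreal (exp (t * (g \<omega> - a)))"
      using t by (auto split: split_indicator)
    then show "indicator {\<omega> \<in> space M. a \<le> g \<omega>} \<omega> \<le> ennreal (exp (- t * a)) * ennreal (exp (t * g \<omega>))"
      by (simp add: ennreal_mult[symmetric] exp_add[symmetric] algebra_simps)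
  qed
  also have "\<dots> = ennreal (exp (- t * a)) * (\<integral>\<^sup>+\<omega>. ennreal (exp (t * g \<omega>)) \<partial>M)"
    using g_meas by (intro nn_integral_cmult) auto
  also have "\<dots> = ennreal (exp (t\<^sup>2 * (\<Sum>p\<in>P. (\<sigma> p)\<^sup>2) / 2 - t * a))"
    unfolding g_def M_def nn_integral_exp_gaussian_matrix_sum[OF P]
    by (simp add: ennreal_mult[symmetric] exp_add[symmetric] algebra_simps)
  finally show ?thesis
    unfolding g_def M_def[symmetric] by (simp add: M.emeasure_eq_measure)
qed

lemma gaussian_matrix_tail:
  fixes P :: "(nat \<times> nat) set" and \<sigma> :: "nat \<times> nat \<Rightarrow> real"
  assumes P: "P \<subseteq> {..<n} \<times> {..<n}" and a: "a \<ge> 0" and v: "(\<Sum>p\<in>P. (\<sigma> p)\<^sup>2) > 0"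
  shows "measure (gaussian_matrix_space n)
           {\<omega> \<in> space (gaussian_matrix_space n). a \<le> (\<Sum>p\<in>P. \<sigma> p * \<omega> p)}
         \<le> exp (- a\<^sup>2 / (2 * (\<Sum>p\<in>P. (\<sigma> p)\<^sup>2)))"
proof -
  define v where "v = (\<Sum>p\<in>P. (\<sigma> p)\<^sup>2)"
  have "(a / v)\<^sup>2 * v / 2 - a / v * a = - a\<^sup>2 / (2 * v)"
    using v unfolding v_def by (simp add: field_simps power2_eq_square)
  then show ?thesis
    using gaussian_matrix_chernoff[OF P, of "a / v" a \<sigma>] a v unfolding v_def by simp
qed

lemma sets_gaussian_matrix_sum_ge:
  fixes P :: "(nat \<times> nat) set" and \<sigma> :: "nat \<times> nat \<Rightarrow> real"
  assumes "P \<subseteq> {..<n} \<times> {..<n}"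
  shows "{E \<in> space (gaussian_matrix_space n). a \<le> (\<Sum>p\<in>P. \<sigma> p * E p)} \<in> sets (gaussian_matrix_space n)"
proof -
  have "(\<lambda>E. \<Sum>p\<in>P. \<sigma> p * E p) \<in> borel_measurable (gaussian_matrix_space n)"
  proof (rule borel_measurable_sum)
    fix p assume "p \<in> P"
    then have "(\<lambda>E. E p) \<in> borel_measurable (gaussian_matrix_space n)"
      using assms by (intro measurable_gaussian_matrix_entry) auto
    then show "(\<lambda>E. \<sigma> p * E p) \<in> borel_measurable (gaussian_matrix_space n)" by simp
  qed
  then show ?thesis by simp
qed

lemma Rats_approx_below:
  fixes x \<delta> :: real
  assumes "0 \<le> x" "0 < \<delta>"
  shows "\<exists>q\<in>\<rat>. 0 \<le> q \<and> q \<le> x \<and> x - q < \<delta>"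
proof (cases "x = 0")
  case True
  then show ?thesis using assms by (intro bexI[of _ 0]) auto
next
  case False
  then have "max 0 (x - \<delta>) < x" using assms by auto
  from Rats_dense_in_real[OF this] obtain q where "q \<in> \<rat>" "max 0 (x - \<delta>) < q" "q < x" by blast
  then show ?thesis by (intro bexI[of _ q]) auto
qed

text \<open>Rounding the coordinates down to nearby rationals preserves feasibility.\<close>
lemma linear_nonneg_if_nonneg_at_rational_points:
  fixes x w :: "'a \<Rightarrow> real"
  assumes S: "finite S" and x: "\<forall>i\<in>S. 0 \<le> x i \<and> x i \<le> 1" "(\<Sum>i\<in>S. x i) \<le> B"
    and rat: "\<And>q. q \<in> PiE S (\<lambda>_. \<rat>) \<Longrightarrow> \<forall>i\<in>S. 0 \<le> q i \<and> q i \<le> 1 \<Longrightarrow> (\<Sum>i\<in>S. q i) \<le> B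
               \<Longrightarrow> 0 \<le> (\<Sum>i\<in>S. q i * w i) + c"
  shows "0 \<le> (\<Sum>i\<in>S. x i * w i) + c"
proof (rule ccontr)
  define h where "h y = (\<Sum>i\<in>S. y i * w i) + c" for y :: "'a \<Rightarrow> real"
  define C where "C = (\<Sum>i\<in>S. \<bar>w i\<bar>)"
  assume "\<not> ?thesis"
  then have hx: "h x < 0" unfolding h_def by simp
  have C: "C \<ge> 0" unfolding C_def by (simp add: sum_nonneg)
  define \<delta> where "\<delta> = - h x / (C + 1)"
  have \<delta>: "\<delta> > 0" unfolding \<delta>_def using hx C by (simp add: field_simps)
  have "\<forall>i\<in>S. \<exists>r\<in>\<rat>. 0 \<le> r \<and> r \<le> x i \<and> x i - r < \<delta>"
    using Rats_approx_below[OF _ \<delta>] x(1) by blast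
  then obtain q where q: "\<And>i. i \<in> S \<Longrightarrow> q i \<in> \<rat> \<and> 0 \<le> q i \<and> q i \<le> x i \<and> x i - q i < \<delta>"
    by metis
  have "(\<Sum>i\<in>S. restrict q S i) \<le> (\<Sum>i\<in>S. x i)"
    using q by (intro sum_mono) auto
  then have "(\<Sum>i\<in>S. restrict q S i) \<le> B" using x(2) by linarith
  then have "h (restrict q S) \<ge> 0"
    unfolding h_def using q x(1) by (intro rat) force+
  moreover have "h (restrict q S) - h x \<le> \<delta> * C"
  proof -
    have "h (restrict q S) - h x = (\<Sum>i\<in>S. (q i - x i) * w i)"
      unfolding h_def by (simp add: sum_subtractf[symmetric] algebra_simps)
    also have "\<dots> \<le> (\<Sum>i\<in>S. \<delta> * \<bar>w i\<bar>)"
    proof (intro sum_mono)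
      fix i assume "i \<in> S"
      then have "\<bar>q i - x i\<bar> \<le> \<delta>" using q by fastforce
      then have "\<bar>q i - x i\<bar> * \<bar>w i\<bar> \<le> \<delta> * \<bar>w i\<bar>" by (rule mult_right_mono) simp
      then show "(q i - x i) * w i \<le> \<delta> * \<bar>w i\<bar>" by (metis abs_ge_self abs_mult order.trans)
    qed
    finally show ?thesis unfolding C_def by (simp add: sum_distrib_left)
  qed
  moreover have "\<delta> * C < - h x"
    using \<delta> C hx unfolding \<delta>_def by (simp add: field_simps)
  ultimately show False by linarith
qed

lemma resolvable_on_iff_Rats:
  fixes Y :: "nat \<Rightarrow> nat \<Rightarrow> real"
  assumes S: "finite S"
  shows "resolvable_on S Y d1 d2 \<longleftrightarrow>
    (\<forall>x\<in>PiE S (\<lambda>_. \<rat>). (\<forall>i\<in>S. 0 \<le> x i \<and> x i \<le> 1) \<and> (\<Sum>i\<in>S. x i) \<le> 10 powr (-6) * real (card S) \<longrightarrow>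
       d1 * (\<Sum>i\<in>S. x i) - d2 * real (card S) \<le> (\<Sum>i\<in>S. \<Sum>j\<in>S. Y i j * x i))"
  (is "_ \<longleftrightarrow> (\<forall>x\<in>_. ?feasible x \<longrightarrow> ?holds x)")
proof
  have slack: "?holds x \<longleftrightarrow> 0 \<le> (\<Sum>i\<in>S. x i * ((\<Sum>j\<in>S. Y i j) - d1)) + d2 * real (card S)" for x
  proof -
    have "(\<Sum>i\<in>S. \<Sum>j\<in>S. Y i j * x i) - d1 * (\<Sum>i\<in>S. x i) = (\<Sum>i\<in>S. x i * ((\<Sum>j\<in>S. Y i j) - d1))"
      by (simp add: sum_distrib_left sum_distrib_right sum_subtractf algebra_simps)
    then show ?thesis by linarith
  qed
  assume rat: "\<forall>x\<in>PiE S (\<lambda>_. \<rat>). ?feasible x \<longrightarrow> ?holds x"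
  show "resolvable_on S Y d1 d2"
    unfolding resolvable_on_def
  proof (intro allI impI, elim conjE)
    fix x assume x: "\<forall>i\<in>S. 0 \<le> x i \<and> x i \<le> 1" "(\<Sum>i\<in>S. x i) \<le> 10 powr (-6) * real (card S)"
    show "?holds x"
      unfolding slack
    proof (rule linear_nonneg_if_nonneg_at_rational_points[OF S x])
      fix q assume "q \<in> PiE S (\<lambda>_. \<rat>)" "\<forall>i\<in>S. 0 \<le> q i \<and> q i \<le> 1"
        "(\<Sum>i\<in>S. q i) \<le> 10 powr (-6) * real (card S)"
      then show "0 \<le> (\<Sum>i\<in>S. q i * ((\<Sum>j\<in>S. Y i j) - d1)) + d2 * real (card S)"
        using rat unfolding slack by blast
    qed
  qed
qed (auto simp: resolvable_on_def)

lemma sets_resolvable_on: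
  fixes S :: "nat set" and Y :: "'a \<Rightarrow> nat \<Rightarrow> nat \<Rightarrow> real"
  assumes S: "finite S"
    and Y: "\<And>i j. i \<in> S \<Longrightarrow> j \<in> S \<Longrightarrow> (\<lambda>\<omega>. Y \<omega> i j) \<in> borel_measurable M"
  shows "{\<omega> \<in> space M. resolvable_on S (Y \<omega>) d1 d2} \<in> sets M"
  unfolding resolvable_on_iff_Rats[OF S]
proof (rule sets.sets_Collect_countable_All')
  show "countable (PiE S (\<lambda>_. \<rat>))" using S by (intro countable_PiE) (auto simp: countable_rat)
  fix x :: "nat \<Rightarrow> real"
  show "{\<omega> \<in> space M. (\<forall>i\<in>S. 0 \<le> x i \<and> x i \<le> 1) \<and> (\<Sum>i\<in>S. x i) \<le> 10 powr (-6) * real (card S) \<longrightarrow>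
      d1 * (\<Sum>i\<in>S. x i) - d2 * real (card S) \<le> (\<Sum>i\<in>S. \<Sum>j\<in>S. Y \<omega> i j * x i)} \<in> sets M"
    using Y by (intro sets.sets_Collect_imp sets.sets_Collect_const borel_measurable_le
        borel_measurable_sum borel_measurable_times borel_measurable_const) auto
qed

lemma sets_resolvable_on_all:
  fixes X :: "'a \<Rightarrow> nat \<Rightarrow> nat \<Rightarrow> real" and P :: "nat set \<Rightarrow> bool"
  assumes X: "\<And>i j. i < n \<Longrightarrow> j < n \<Longrightarrow> (\<lambda>\<omega>. X \<omega> i j) \<in> borel_measurable M"
  shows "{\<omega> \<in> space M. \<forall>S. S \<subseteq> {..<n} \<and> P S \<longrightarrow> resolvable_on S (X \<omega>) (d1 S) (d2 S)} \<in> sets M"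
proof -
  have "{\<omega> \<in> space M. \<forall>S\<in>{S. S \<subseteq> {..<n} \<and> P S}. resolvable_on S (X \<omega>) (d1 S) (d2 S)} \<in> sets M"
  proof (rule sets.sets_Collect_countable_All')
    fix S assume "S \<in> {S. S \<subseteq> {..<n} \<and> P S}"
    then have "S \<subseteq> {..<n}" by simp
    then show "{\<omega> \<in> space M. resolvable_on S (X \<omega>) (d1 S) (d2 S)} \<in> sets M"
      using X by (intro sets_resolvable_on) (auto intro: finite_subset)
  next
    show "countable {S. S \<subseteq> {..<n} \<and> P S}"
      by (rule countable_finite) (auto intro: finite_subset[of _ "Pow {..<n}"])
  qed
  then show ?thesis by simp
qed

lemma weighted_sum_le_if_subset_sums_le:
  fixes x c :: "'a \<Rightarrow> real"
  assumes S: "finite S" and x: "\<forall>i\<in>S. 0 \<le> x i \<and> x i \<le> 1"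
    and sums: "\<And>U. U \<subseteq> S \<Longrightarrow> (\<Sum>i\<in>U. c i) \<le> a * real (card U) + b"
  shows "(\<Sum>i\<in>S. x i * c i) \<le> a * (\<Sum>i\<in>S. x i) + b"
proof -
  define U where "U = {i \<in> S. a < c i}"
  have "(\<Sum>i\<in>S. x i * (c i - a)) \<le> (\<Sum>i\<in>S. if a < c i then c i - a else 0)"
  proof (intro sum_mono)
    fix i assume "i \<in> S"
    then have "0 \<le> x i" "x i \<le> 1" using x by auto
    then show "x i * (c i - a) \<le> (if a < c i then c i - a else 0)"
      by (cases "a < c i") (simp_all add: mult_left_le_one_le mult_nonneg_nonpos)
  qed
  also have "\<dots> = (\<Sum>i\<in>U. c i) - a * real (card U)"
    unfolding U_def using S by (simp add: sum.inter_filter[symmetric] sum_subtractf)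
  also have "\<dots> \<le> b" using sums[of U] unfolding U_def by auto
  finally show ?thesis by (simp add: sum_subtractf sum_distrib_left algebra_simps)
qed

lemma weighted_sum_ge_if_subset_sums_ge:
  fixes x c :: "'a \<Rightarrow> real"
  assumes S: "finite S" and x: "\<forall>i\<in>S. 0 \<le> x i \<and> x i \<le> 1"
    and sums: "\<And>U. U \<subseteq> S \<Longrightarrow> a * real (card U) - b \<le> (\<Sum>i\<in>U. c i)"
  shows "a * (\<Sum>i\<in>S. x i) - b \<le> (\<Sum>i\<in>S. x i * c i)"
proof -
  have "(\<Sum>i\<in>S. x i * - c i) \<le> - a * (\<Sum>i\<in>S. x i) + b"
  proof (rule weighted_sum_le_if_subset_sums_le[OF S x])
    fix U assume "U \<subseteq> S"
    then show "(\<Sum>i\<in>U. - c i) \<le> - a * real (card U) + b" using sums[of U] by (simp add: sum_negf)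
  qed
  then show ?thesis by (simp add: sum_negf)
qed

definition block_sums_bounded :: "nat \<Rightarrow> (nat \<Rightarrow> real) \<Rightarrow> real \<Rightarrow> (nat \<times> nat \<Rightarrow> real) \<Rightarrow> bool" where
  "block_sums_bounded n l K E \<longleftrightarrow> (\<forall>U T. U \<subseteq> {..<n} \<longrightarrow> T \<subseteq> {..<n} \<longrightarrow>
     (\<Sum>i\<in>U. \<Sum>j\<in>T. l i * l j * E (i, j)) \<le> sqrt (real n) * (K / 6 * real (card U) + real (card T)))"

definition row_sums_bounded :: "nat \<Rightarrow> (nat \<Rightarrow> real) \<Rightarrow> real \<Rightarrow> real \<Rightarrow> (nat \<times> nat \<Rightarrow> real) \<Rightarrow> bool" where
  "row_sums_bounded n l c b E \<longleftrightarrow> (\<forall>U. U \<subseteq> {..<n} \<longrightarrow>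
     - (sqrt (real n) * (c * real (card U) + b)) \<le> (\<Sum>i\<in>U. \<Sum>j<n. l i * l j * E (i, j)))"

lemma weighted_block_sums_le:
  fixes l x :: "nat \<Rightarrow> real" and E :: "nat \<times> nat \<Rightarrow> real"
  assumes block: "block_sums_bounded n l K E" and S: "S \<subseteq> {..<n}" and T: "T \<subseteq> {..<n}"
    and x: "\<forall>i\<in>S. 0 \<le> x i \<and> x i \<le> 1"
  shows "(\<Sum>i\<in>S. x i * (\<Sum>j\<in>T. l i * l j * E (i, j)))
      \<le> sqrt (real n) * K / 6 * (\<Sum>i\<in>S. x i) + sqrt (real n) * real (card T)"
proof (rule weighted_sum_le_if_subset_sums_le[OF finite_subset[OF S] x])
  fix U assume "U \<subseteq> S"
  then have "U \<subseteq> {..<n}" using S by blast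
  then show "(\<Sum>i\<in>U. \<Sum>j\<in>T. l i * l j * E (i, j))
      \<le> sqrt (real n) * K / 6 * real (card U) + sqrt (real n) * real (card T)"
    using block T unfolding block_sums_bounded_def by (simp add: algebra_simps)
qed simp

lemma weighted_row_sums_ge:
  fixes l x :: "nat \<Rightarrow> real" and E :: "nat \<times> nat \<Rightarrow> real"
  assumes row: "row_sums_bounded n l c b E" and S: "S \<subseteq> {..<n}"
    and x: "\<forall>i\<in>S. 0 \<le> x i \<and> x i \<le> 1"
  shows "- (sqrt (real n) * c) * (\<Sum>i\<in>S. x i) - sqrt (real n) * b
      \<le> (\<Sum>i\<in>S. x i * (\<Sum>j<n. l i * l j * E (i, j)))"
proof (rule weighted_sum_ge_if_subset_sums_ge[OF finite_subset[OF S] x])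
  fix U assume "U \<subseteq> S"
  then have "U \<subseteq> {..<n}" using S by blast
  then have "- (sqrt (real n) * (c * real (card U) + b)) \<le> (\<Sum>i\<in>U. \<Sum>j<n. l i * l j * E (i, j))"
    using row unfolding row_sums_bounded_def by blast
  moreover have "- (sqrt (real n) * c) * real (card U) - sqrt (real n) * b = - (sqrt (real n) * (c * real (card U) + b))"
    by (simp add: algebra_simps)
  ultimately show "- (sqrt (real n) * c) * real (card U) - sqrt (real n) * b \<le> (\<Sum>i\<in>U. \<Sum>j<n. l i * l j * E (i, j))"
    by simp
qed simp

lemma masked_form_split:
  fixes l x :: "nat \<Rightarrow> real" and E :: "nat \<times> nat \<Rightarrow> real"
  assumes S: "S \<subseteq> {..<n}" and l: "\<forall>i\<in>S. l i * l i = 1"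
  shows "(\<Sum>i\<in>S. \<Sum>j\<in>S. (lam * l i * l j / s + E (i, j)) * (l i * l j) * x i)
       = real (card S) * lam / s * (\<Sum>i\<in>S. x i) + (\<Sum>i\<in>S. x i * (\<Sum>j<n. l i * l j * E (i, j)))
         - (\<Sum>i\<in>S. x i * (\<Sum>j\<in>{..<n} - S. l i * l j * E (i, j)))"
proof -
  have row: "(\<Sum>j\<in>S. (lam * l i * l j / s + E (i, j)) * (l i * l j) * x i)
      = real (card S) * lam / s * x i + x i * (\<Sum>j<n. l i * l j * E (i, j))
        - x i * (\<Sum>j\<in>{..<n} - S. l i * l j * E (i, j))" if i: "i \<in> S" for i
  proof -
    have "(\<Sum>j\<in>S. (lam * l i * l j / s + E (i, j)) * (l i * l j) * x i)
        = x i * (\<Sum>j\<in>S. lam / s + l i * l j * E (i, j))"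
    proof (subst sum_distrib_left, intro sum.cong refl)
      fix j assume "j \<in> S"
      then have "(l i * l i) * (l j * l j) = 1" using l i by simp
      then show "(lam * l i * l j / s + E (i, j)) * (l i * l j) * x i = x i * (lam / s + l i * l j * E (i, j))"
        by (simp add: algebra_simps)
    qed
    also have "(\<Sum>j<n. l i * l j * E (i, j))
        = (\<Sum>j\<in>S. l i * l j * E (i, j)) + (\<Sum>j\<in>{..<n} - S. l i * l j * E (i, j))"
      using sum.subset_diff[OF S, of "\<lambda>j. l i * l j * E (i, j)"] by (simp add: add.commute)
    ultimately show ?thesis by (simp add: sum.distrib algebra_simps)
  qed
  show ?thesis by (simp add: row sum.distrib sum_subtractf sum_distrib_left)
qed

lemma noise_terms_le_defect:
  fixes n :: nat and lam K \<theta> \<mu> m s :: real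
  assumes n: "n \<ge> 1" and K: "K \<ge> 10^2" and lam: "lam \<ge> 10^2 * K" and \<theta>: "\<theta> \<ge> 0" and \<mu>: "\<mu> \<ge> 0"
    and s: "s \<ge> 0" and m: "m \<le> real n" "m \<ge> (1 - K / (3 * lam)) * real n"
  shows "s * (\<theta> * real n + 10^4 * \<mu>) + s * (real n - m)
      \<le> 1.1 * s * (\<theta> + (real n - m) / real n + 10^4 * \<mu> / real n) * m"
proof -
  define Q where "Q = \<theta> * real n + 10^4 * \<mu> + (real n - m)"
  have Q: "Q \<ge> 0" unfolding Q_def using \<theta> \<mu> m by simp
  have "K / (3 * lam) \<le> 1 / 300" using K lam by (simp add: field_simps)
  then have "(1 - K / (3 * lam)) * real n \<ge> 299 / 300 * real n" by (intro mult_right_mono) auto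
  then have "1.1 * m / real n \<ge> 1" using m n by (simp add: field_simps)
  then have "1 * Q \<le> 1.1 * m / real n * Q" using Q by (rule mult_right_mono)
  have "s * (\<theta> * real n + 10^4 * \<mu>) + s * (real n - m) = s * Q" unfolding Q_def by (simp add: algebra_simps)
  also have "\<dots> \<le> s * (1.1 * m / real n * Q)"
    using \<open>1 * Q \<le> 1.1 * m / real n * Q\<close> s by (intro mult_left_mono) simp_all
  also have "\<dots> = 1.1 * s * (\<theta> + (real n - m) / real n + 10^4 * \<mu> / real n) * m"
    unfolding Q_def using n by (simp add: field_simps)
  finally show ?thesis .
qed

lemma resolvable_on_if_sums_bounded:
  fixes n :: nat and l :: "nat \<Rightarrow> real" and lam K \<theta> \<mu> :: real and E :: "nat \<times> nat \<Rightarrow> real"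
  assumes n: "n \<ge> 1" and l_pm: "\<forall>i<n. l i \<in> {-1, 1}"
    and K_ge: "K \<ge> 10^2" and lam_ge: "lam \<ge> 10^2 * K" and \<theta>: "\<theta> \<ge> 0" and \<mu>: "\<mu> \<ge> 0"
    and block: "block_sums_bounded n l K E"
    and row: "row_sums_bounded n l (lam - K) (\<theta> * real n + 10^4 * \<mu>) E"
    and S: "S \<subseteq> {..<n}" and card_S: "real (card S) \<ge> (1 - K / (3 * lam)) * real n"
  shows "resolvable_on S (\<lambda>i j. (lam * l i * l j / sqrt (real n) + E (i, j)) * (l i * l j))
           (0.5 * K * sqrt (real n))
           (1.1 * sqrt (real n) * (\<theta> + (real n - real (card S)) / real n + 10^4 * \<mu> / real n))"
  unfolding resolvable_on_def
proof (intro allI impI, elim conjE)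
  fix x :: "nat \<Rightarrow> real" assume x: "\<forall>i\<in>S. 0 \<le> x i \<and> x i \<le> 1"
  define s where "s = sqrt (real n)"
  define m where "m = real (card S)"
  define X where "X = (\<Sum>i\<in>S. x i)"
  have s: "s > 0" "s * s = real n" unfolding s_def using n by simp_all
  have lam: "lam > 0" using K_ge lam_ge by simp
  have m: "m \<le> real n" "m \<ge> (1 - K / (3 * lam)) * real n"
    using card_S card_mono[OF _ S] unfolding m_def by simp_all
  have X: "X \<ge> 0" unfolding X_def using x by (simp add: sum_nonneg)
  have "real (card ({..<n} - S)) = real n - m"
    unfolding m_def using S finite_subset[OF S] card_mono[OF _ S] by (simp add: card_Diff_subset of_nat_diff)
  then have cross: "(\<Sum>i\<in>S. x i * (\<Sum>j\<in>{..<n} - S. l i * l j * E (i, j))) \<le> s * K / 6 * X + s * (real n - m)"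
    using weighted_block_sums_le[OF block S _ x, of "{..<n} - S"] unfolding s_def X_def by simp
  have rows: "- (s * (lam - K) * X) - s * (\<theta> * real n + 10^4 * \<mu>) \<le> (\<Sum>i\<in>S. x i * (\<Sum>j<n. l i * l j * E (i, j)))"
    using weighted_row_sums_ge[OF row S x] unfolding s_def X_def by simp
  have "s * s * (lam - K / 3) \<le> m * lam"
  proof -
    have "(1 - K / (3 * lam)) * real n * lam \<le> m * lam" using mult_right_mono[OF m(2), of lam] lam by simp
    also have "(1 - K / (3 * lam)) * real n * lam = real n * (lam - K / 3)" using lam by (simp add: field_simps)
    finally show ?thesis by (simp only: s(2))
  qed
  then have "s * (lam - K / 3) \<le> m * lam / s" using s(1) by (simp add: pos_le_divide_eq mult_ac)
  then have signal: "s * (lam - K / 3) * X \<le> m * lam / s * X" using X by (rule mult_right_mono)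
  have "\<forall>i\<in>S. l i * l i = 1" using l_pm S by auto
  note split = masked_form_split[OF S this, of lam s E x, folded m_def X_def]
  have "s * (lam - K / 3) * X - s * (lam - K) * X - s * K / 6 * X = 0.5 * K * s * X" by (simp add: algebra_simps)
  then have "0.5 * K * s * X - 1.1 * s * (\<theta> + (real n - m) / real n + 10^4 * \<mu> / real n) * m
      \<le> (\<Sum>i\<in>S. \<Sum>j\<in>S. (lam * l i * l j / s + E (i, j)) * (l i * l j) * x i)"
    using split cross rows signal noise_terms_le_defect[OF n K_ge lam_ge \<theta> \<mu> less_imp_le[OF s(1)] m]
    by linarith
  then show "0.5 * K * sqrt (real n) * (\<Sum>i\<in>S. x i)
      - 1.1 * sqrt (real n) * (\<theta> + (real n - real (card S)) / real n + 10^4 * \<mu> / real n) * real (card S)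
      \<le> (\<Sum>i\<in>S. \<Sum>j\<in>S. (lam * l i * l j / sqrt (real n) + E (i, j)) * (l i * l j) * x i)"
    unfolding s_def m_def X_def .
qed

lemma sum_squares_signs:
  fixes \<sigma> :: "'a \<Rightarrow> real"
  assumes "\<forall>p\<in>P. \<bar>\<sigma> p\<bar> = 1"
  shows "(\<Sum>p\<in>P. (\<sigma> p)\<^sup>2) = real (card P)"
proof -
  have "(\<Sum>p\<in>P. (\<sigma> p)\<^sup>2) = (\<Sum>p\<in>P. 1)"
    using assms by (intro sum.cong refl) (metis power2_abs power_one)
  then show ?thesis by simp
qed

lemma abs_sign_product:
  fixes l :: "nat \<Rightarrow> real"
  assumes "\<forall>i<n. l i \<in> {-1, 1}" "i < n" "j < n"
  shows "\<bar>l i * l j\<bar> = 1"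
proof -
  have "\<bar>l i\<bar> = 1" "\<bar>l j\<bar> = 1" using assms by auto
  then show ?thesis by (simp add: abs_mult)
qed

lemma prob_block_sum_ge:
  fixes l :: "nat \<Rightarrow> real" and K :: real
  assumes K: "K \<ge> 0" and l_pm: "\<forall>i<n. l i \<in> {-1, 1}"
    and U: "U \<subseteq> {..<n}" "U \<noteq> {}" and T: "T \<subseteq> {..<n}" "T \<noteq> {}"
  shows "measure (gaussian_matrix_space n)
      {E \<in> space (gaussian_matrix_space n). sqrt (real n) * (K / 6 * real (card U) + real (card T))
         \<le> (\<Sum>p\<in>U \<times> T. l (fst p) * l (snd p) * E p)}
    \<le> exp (- K * real n / 3)"
proof -
  define u where "u = real (card U)"
  define v where "v = real (card T)"
  define a where "a = sqrt (real n) * (K / 6 * u + v)"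
  have "finite U" "finite T" using U T finite_subset by auto
  then have uv: "u \<ge> 1" "v \<ge> 1" unfolding u_def v_def using U T by (auto simp: Suc_le_eq card_gt_0_iff)
  have var: "(\<Sum>p\<in>U \<times> T. (l (fst p) * l (snd p))\<^sup>2) = u * v"
    using U T abs_sign_product[OF l_pm] unfolding u_def v_def
    by (subst sum_squares_signs) (auto simp: card_cartesian_product)
  have bound: "K * real n / 3 \<le> a\<^sup>2 / (2 * (u * v))"
  proof -
    have "4 * (K / 6 * u) * v \<le> (K / 6 * u + v)\<^sup>2"
      using zero_le_power2[of "K / 6 * u - v"] by (simp add: power2_eq_square algebra_simps)
    then have "real n * (4 * (K / 6 * u) * v) \<le> real n * (K / 6 * u + v)\<^sup>2"
      by (rule mult_left_mono) simp
    also have "\<dots> = a\<^sup>2" unfolding a_def by (simp add: power_mult_distrib)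
    finally show ?thesis using uv by (simp add: field_simps)
  qed
  have tail: "measure (gaussian_matrix_space n)
      {E \<in> space (gaussian_matrix_space n). a \<le> (\<Sum>p\<in>U \<times> T. l (fst p) * l (snd p) * E p)}
    \<le> exp (- a\<^sup>2 / (2 * (u * v)))"
    using gaussian_matrix_tail[of "U \<times> T" n a "\<lambda>p. l (fst p) * l (snd p)"] U T K uv var
    unfolding a_def by auto
  also have "exp (- a\<^sup>2 / (2 * (u * v))) \<le> exp (- K * real n / 3)"
    using bound by simp
  finally show ?thesis unfolding a_def u_def v_def .
qed

lemma prob_row_sum_ge:
  fixes l :: "nat \<Rightarrow> real" and c b :: real
  assumes c: "c \<ge> 0" and b: "b \<ge> 0" and l_pm: "\<forall>i<n. l i \<in> {-1, 1}"
    and U: "U \<subseteq> {..<n}" "U \<noteq> {}"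
  shows "measure (gaussian_matrix_space n)
      {E \<in> space (gaussian_matrix_space n). sqrt (real n) * (c * real (card U) + b)
         \<le> (\<Sum>p\<in>U \<times> {..<n}. - (l (fst p) * l (snd p)) * E p)}
    \<le> exp (- (c\<^sup>2 / 2) * real (card U) - c * b)"
proof -
  define u where "u = real (card U)"
  define a where "a = sqrt (real n) * (c * u + b)"
  have u: "u \<ge> 1" unfolding u_def using U finite_subset[OF U(1)] by (auto simp: Suc_le_eq card_gt_0_iff)
  have n: "real n \<ge> 1" using U by auto
  have var: "(\<Sum>p\<in>U \<times> {..<n}. (- (l (fst p) * l (snd p)))\<^sup>2) = u * real n"
    using U abs_sign_product[OF l_pm] unfolding u_def
    by (subst sum_squares_signs) (auto simp: card_cartesian_product)
  have bound: "c\<^sup>2 / 2 * u + c * b \<le> a\<^sup>2 / (2 * (u * real n))"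
  proof -
    have "u * (c\<^sup>2 * u + 2 * c * b) \<le> (c * u + b)\<^sup>2"
      by (simp add: power2_eq_square algebra_simps)
    then have "real n * (u * (c\<^sup>2 * u + 2 * c * b)) \<le> a\<^sup>2"
      unfolding a_def by (simp add: power_mult_distrib mult_left_mono)
    then show ?thesis using u n by (simp add: field_simps)
  qed
  have tail: "measure (gaussian_matrix_space n)
      {E \<in> space (gaussian_matrix_space n). a \<le> (\<Sum>p\<in>U \<times> {..<n}. - (l (fst p) * l (snd p)) * E p)}
    \<le> exp (- a\<^sup>2 / (2 * (u * real n)))"
    using gaussian_matrix_tail[of "U \<times> {..<n}" n a "\<lambda>p. - (l (fst p) * l (snd p))"] U c b u n var
    unfolding a_def by auto
  also have "exp (- a\<^sup>2 / (2 * (u * real n))) \<le> exp (- (c\<^sup>2 / 2) * u - c * b)"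
    using bound by simp
  finally show ?thesis unfolding a_def u_def .
qed

lemma four_pow_mul_exp_le_inverse_square:
  fixes K :: real
  assumes n: "n \<ge> 1" and K: "K \<ge> 10^2"
  shows "4 ^ n * exp (- K * real n / 3) \<le> 1 / (real n)\<^sup>2"
proof -
  have "(4::real) \<le> exp 2"
    using exp_ge_add_one_self[of 1] mult_mono[of 2 "exp 1" 2 "exp (1::real)"]
    by (simp add: exp_add[symmetric])
  then have "(4::real) ^ n \<le> exp 2 ^ n" by (rule power_mono) simp
  then have "(4::real) ^ n \<le> exp (2 * real n)" by (simp add: exp_of_nat_mult[symmetric] mult.commute)
  moreover have "exp (2 * real n) * exp (- K * real n / 3) \<le> exp (- 2 * real n)"
    using K mult_right_mono[of 12 K "real n"] by (simp add: exp_add[symmetric])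
  moreover have "exp (- 2 * real n) \<le> 1 / (real n)\<^sup>2"
  proof -
    have "real n \<le> exp (real n)" using exp_ge_add_one_self[of "real n"] by linarith
    then have "(real n)\<^sup>2 \<le> exp (2 * real n)"
      using power_mono[of "real n" "exp (real n)" 2] by (simp add: exp_of_nat_mult[symmetric] mult.commute)
    then show ?thesis using n by (simp add: exp_minus field_simps)
  qed
  ultimately show ?thesis
    by (meson exp_gt_zero less_imp_le mult_right_mono order_trans)
qed

lemma one_plus_pow_sub_one_le:
  fixes q :: real
  assumes "q \<ge> 0"
  shows "(1 + q) ^ n - 1 \<le> real n * q * exp (real n * q)"
proof -
  have "(1 + q) ^ n \<le> exp q ^ n"
    using assms exp_ge_add_one_self[of q] by (intro power_mono) (auto simp: add.commute)
  also have "\<dots> = exp (real n * q)" by (simp add: exp_of_nat_mult[symmetric])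
  finally have "(1 + q) ^ n - 1 \<le> exp (real n * q) - 1" by simp
  also have "\<dots> \<le> real n * q * exp (real n * q)"
  proof -
    have "(1 - real n * q) * exp (real n * q) \<le> exp (- (real n * q)) * exp (real n * q)"
      using exp_ge_add_one_self[of "- (real n * q)"] by (intro mult_right_mono) auto
    then show ?thesis by (simp add: exp_minus field_simps)
  qed
  finally show ?thesis .
qed

lemma mult_exp_le_one:
  fixes y L :: real
  assumes y: "y \<ge> 0" and L: "L \<ge> 2"
  shows "y * exp (y - L * y) \<le> 1"
proof -
  have "y - L * y \<le> - y" using y L mult_right_mono[of 2 L y] by linarith
  then have "y * exp (y - L * y) \<le> y * exp (- y)" using y by (intro mult_left_mono) auto
  also have "\<dots> \<le> 1"
  proof -
    have "y \<le> exp y" using exp_ge_add_one_self[of y] by linarith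
    then show ?thesis by (simp add: exp_minus field_simps)
  qed
  finally show ?thesis .
qed

text \<open>The union bound over all nonempty sets of rows, with \<open>q\<close> the contribution of a single row.\<close>
lemma row_union_bound_le:
  fixes K lam \<kappa> :: real
  assumes K: "K \<ge> 10^2" and lam: "lam \<ge> 10^2 * K" and \<kappa>: "\<kappa> > 0"
  defines "\<theta> \<equiv> exp (- (lam\<^sup>2) / 2 + 3 * \<kappa> + 2 * K * lam)"
    and "q \<equiv> exp (- ((lam - K)\<^sup>2) / 2)" and "\<mu> \<equiv> max 0 (\<kappa> - lam)"
  shows "exp (- (lam - K) * (\<theta> * real n + 10^4 * \<mu>)) * ((1 + q) ^ n - 1) \<le> exp (- 10 * \<kappa>)"
proof -
  define y where "y = \<theta> * real n"
  define L where "L = lam - K"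
  define r where "r = exp (- K * lam - 3 * \<kappa>)"
  have L: "L \<ge> 2" unfolding L_def using K lam by simp
  have y: "y \<ge> 0" unfolding y_def \<theta>_def by simp
  have "K * lam \<ge> 0" using K lam by simp
  then have r: "0 \<le> r" "r \<le> 1" unfolding r_def using \<kappa> by auto
  have "q \<le> \<theta> * r"
  proof -
    have "\<theta> * r = exp (- (lam\<^sup>2) / 2 + K * lam)"
      unfolding \<theta>_def r_def by (simp add: exp_add[symmetric] algebra_simps)
    moreover have "- ((lam - K)\<^sup>2) / 2 \<le> - (lam\<^sup>2) / 2 + K * lam"
      using zero_le_power2[of K] by (simp add: power2_diff)
    ultimately show ?thesis unfolding q_def by simp
  qed
  then have nq: "real n * q \<le> y * r"
    unfolding y_def using mult_left_mono[of q "\<theta> * r" "real n"] by (simp add: mult_ac)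
  have "(1 + q) ^ n - 1 \<le> y * r * exp y"
  proof -
    have "real n * q \<le> y" using nq y r mult_left_le[of r y] by linarith
    then have "real n * q * exp (real n * q) \<le> y * r * exp y"
      using y r by (intro mult_mono[OF nq]) auto
    then show ?thesis using one_plus_pow_sub_one_le[of q n] unfolding q_def by simp
  qed
  then have "exp (- L * (y + 10^4 * \<mu>)) * ((1 + q) ^ n - 1)
      \<le> exp (- L * (y + 10^4 * \<mu>)) * (y * r * exp y)"
    by (intro mult_left_mono) auto
  also have "\<dots> = (y * exp (y - L * y)) * (r * exp (- L * 10^4 * \<mu>))"
    by (simp add: exp_add[symmetric] exp_diff algebra_simps)
  also have "\<dots> \<le> 1 * exp (- 10 * \<kappa>)"
  proof (intro mult_mono)
    show "y * exp (y - L * y) \<le> 1" using y L by (rule mult_exp_le_one)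
    have Klam: "100 * lam \<le> K * lam" using K lam by (intro mult_right_mono) auto
    have "7 * \<mu> \<le> L * 10^4 * \<mu>" using L by (intro mult_right_mono) (auto simp: \<mu>_def)
    moreover have "\<kappa> - lam \<le> \<mu>" "0 \<le> lam" using K lam by (auto simp: \<mu>_def)
    ultimately have "10 * \<kappa> \<le> K * lam + 3 * \<kappa> + L * 10^4 * \<mu>" using Klam by linarith
    then show "r * exp (- L * 10^4 * \<mu>) \<le> exp (- 10 * \<kappa>)"
      unfolding r_def by (simp add: exp_add[symmetric])
  qed (use y r in auto)
  finally show ?thesis unfolding L_def y_def by simp
qed

lemma block_sums_bounded_whp:
  fixes l :: "nat \<Rightarrow> real" and K :: real
  assumes n: "n \<ge> 1" and K: "K \<ge> 10^2" and l_pm: "\<forall>i<n. l i \<in> {-1, 1}"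
  obtains B where "B \<in> sets (gaussian_matrix_space n)"
    "measure (gaussian_matrix_space n) B \<le> 1 / (real n)\<^sup>2"
    "\<And>E. E \<in> space (gaussian_matrix_space n) - B \<Longrightarrow> block_sums_bounded n l K E"
proof -
  define M where "M = gaussian_matrix_space n"
  define I where "I = (Pow {..<n} - {{}}) \<times> (Pow {..<n} - {{}})"
  define Bad where "Bad UT = {E \<in> space M. sqrt (real n) * (K / 6 * real (card (fst UT)) + real (card (snd UT)))
      \<le> (\<Sum>p\<in>fst UT \<times> snd UT. l (fst p) * l (snd p) * E p)}" for UT :: "nat set \<times> nat set"
  interpret prob_space M unfolding M_def by (rule prob_space_gaussian_matrix_space)
  have finite_I: "finite I" unfolding I_def by simp
  have sets_Bad: "Bad UT \<in> sets M" if "UT \<in> I" for UT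
    using that unfolding Bad_def M_def I_def by (intro sets_gaussian_matrix_sum_ge) auto
  show thesis
  proof (rule that[of "\<Union>UT\<in>I. Bad UT", folded M_def])
    show "(\<Union>UT\<in>I. Bad UT) \<in> sets M" using sets_Bad finite_I by blast
    have "measure M (\<Union>UT\<in>I. Bad UT) \<le> (\<Sum>UT\<in>I. measure M (Bad UT))"
      by (rule measure_UNION_le[OF finite_I sets_Bad])
    also have "\<dots> \<le> (\<Sum>UT\<in>I. exp (- K * real n / 3))"
    proof (intro sum_mono)
      fix UT assume "UT \<in> I"
      then obtain U T where "UT = (U, T)" "U \<subseteq> {..<n}" "U \<noteq> {}" "T \<subseteq> {..<n}" "T \<noteq> {}"
        unfolding I_def by auto
      then show "measure M (Bad UT) \<le> exp (- K * real n / 3)"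
        using prob_block_sum_ge[of K n l U T] K l_pm unfolding Bad_def M_def by simp
    qed
    also have "\<dots> \<le> 4 ^ n * exp (- K * real n / 3)"
    proof -
      have "card I \<le> card (Pow {..<n} \<times> Pow {..<n :: nat})" unfolding I_def by (intro card_mono) auto
      then have "real (card I) \<le> 4 ^ n"
        by (simp add: card_cartesian_product card_Pow power_mult_distrib[symmetric])
      then show ?thesis by (simp add: mult_right_mono)
    qed
    also have "\<dots> \<le> 1 / (real n)\<^sup>2" using n K by (rule four_pow_mul_exp_le_inverse_square)
    finally show "measure M (\<Union>UT\<in>I. Bad UT) \<le> 1 / (real n)\<^sup>2" .
  next
    fix E assume E: "E \<in> space M - (\<Union>UT\<in>I. Bad UT)"
    show "block_sums_bounded n l K E"
      unfolding block_sums_bounded_def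
    proof (intro allI impI)
      fix U T assume "U \<subseteq> {..<n}" "T \<subseteq> {..<n}"
      show "(\<Sum>i\<in>U. \<Sum>j\<in>T. l i * l j * E (i, j)) \<le> sqrt (real n) * (K / 6 * real (card U) + real (card T))"
      proof (cases "U = {} \<or> T = {}")
        case False
        with \<open>U \<subseteq> {..<n}\<close> \<open>T \<subseteq> {..<n}\<close> have "E \<notin> Bad (U, T)" using E unfolding I_def by blast
        then show ?thesis using E unfolding Bad_def by (auto simp: sum.cartesian_product')
      qed (use K in auto)
    qed
  qed
qed

lemma row_sums_bounded_whp:
  fixes l :: "nat \<Rightarrow> real" and c b :: real
  assumes c: "c \<ge> 0" and b: "b \<ge> 0" and l_pm: "\<forall>i<n. l i \<in> {-1, 1}"
  obtains B where "B \<in> sets (gaussian_matrix_space n)"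
    "measure (gaussian_matrix_space n) B \<le> exp (- c * b) * ((1 + exp (- c\<^sup>2 / 2)) ^ n - 1)"
    "\<And>E. E \<in> space (gaussian_matrix_space n) - B \<Longrightarrow> row_sums_bounded n l c b E"
proof -
  define M where "M = gaussian_matrix_space n"
  define I where "I = Pow {..<n} - {{}}"
  define q where "q = exp (- c\<^sup>2 / 2)"
  define Bad where "Bad U = {E \<in> space M. sqrt (real n) * (c * real (card U) + b)
      \<le> (\<Sum>p\<in>U \<times> {..<n}. - (l (fst p) * l (snd p)) * E p)}" for U :: "nat set"
  interpret prob_space M unfolding M_def by (rule prob_space_gaussian_matrix_space)
  have finite_I: "finite I" unfolding I_def by simp
  have sets_Bad: "Bad U \<in> sets M" if "U \<in> I" for U
    using that unfolding Bad_def M_def I_def by (intro sets_gaussian_matrix_sum_ge) auto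
  show thesis
  proof (rule that[of "\<Union>U\<in>I. Bad U", folded M_def q_def])
    show "(\<Union>U\<in>I. Bad U) \<in> sets M" using sets_Bad finite_I by blast
    have "measure M (\<Union>U\<in>I. Bad U) \<le> (\<Sum>U\<in>I. measure M (Bad U))"
      by (rule measure_UNION_le[OF finite_I sets_Bad])
    also have "\<dots> \<le> (\<Sum>U\<in>I. exp (- c * b) * q ^ card U)"
    proof (intro sum_mono)
      fix U assume "U \<in> I"
      then have "measure M (Bad U) \<le> exp (- (c\<^sup>2 / 2) * real (card U) - c * b)"
        using c b l_pm unfolding Bad_def M_def I_def by (intro prob_row_sum_ge) auto
      also have "\<dots> = exp (- c * b) * q ^ card U"
        unfolding q_def by (simp add: exp_add[symmetric] exp_of_nat_mult[symmetric] algebra_simps)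
      finally show "measure M (Bad U) \<le> exp (- c * b) * q ^ card U" .
    qed
    also have "(\<Sum>U\<in>I. exp (- c * b) * q ^ card U) = exp (- c * b) * ((1 + q) ^ n - 1)"
    proof -
      have "(1 + q) ^ n = (\<Sum>U\<in>Pow {..<n}. q ^ card U)"
        using prod_add[of "{..<n}" "\<lambda>_. q" "\<lambda>_. 1"] by (simp add: add.commute)
      also have "\<dots> = 1 + (\<Sum>U\<in>I. q ^ card U)"
        unfolding I_def by (subst sum.remove[of _ "{}"]) auto
      finally show ?thesis by (simp add: sum_distrib_left)
    qed
    finally show "measure M (\<Union>U\<in>I. Bad U) \<le> exp (- c * b) * ((1 + q) ^ n - 1)" .
  next
    fix E assume E: "E \<in> space M - (\<Union>U\<in>I. Bad U)"
    show "row_sums_bounded n l c b E"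
      unfolding row_sums_bounded_def
    proof (intro allI impI)
      fix U assume "U \<subseteq> {..<n}"
      show "- (sqrt (real n) * (c * real (card U) + b)) \<le> (\<Sum>i\<in>U. \<Sum>j<n. l i * l j * E (i, j))"
      proof (cases "U = {}")
        case False
        with \<open>U \<subseteq> {..<n}\<close> have "E \<notin> Bad U" using E unfolding I_def by blast
        then show ?thesis
          using E unfolding Bad_def by (auto simp: sum.cartesian_product' sum_negf)
      qed (use b in auto)
    qed
  qed
qed

lemma (in prob_space) prob_ge_if_compl_subset_Un:
  assumes "A \<in> events" "B \<in> events" "C \<in> events" and "space M - (B \<union> C) \<subseteq> A"
  shows "1 - prob B - prob C \<le> prob A"
proof -
  have "1 - prob (B \<union> C) \<le> prob A"
    using assms finite_measure_mono[of "space M - (B \<union> C)" A] prob_compl[of "B \<union> C"] by auto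
  then show ?thesis using measure_Un_le[of B M C] assms by linarith
qed

theorem mainTheorem17:
  fixes n :: nat and l :: "nat \<Rightarrow> real" and lam \<kappa> K :: real
  assumes l_pm: "\<forall>i<n. l i \<in> {-1, 1}"
    and K_ge: "K \<ge> 10^2"
    and lam_ge: "lam \<ge> 10^2 * K"
  defines "\<theta> \<equiv> exp (- (lam\<^sup>2) / 2 + 3 * \<kappa> + 2 * K * lam)"
  shows "measure (gaussian_matrix_space n)
     {E \<in> space (gaussian_matrix_space n).
        \<forall>S. S \<subseteq> {..<n} \<and> real (card S) \<ge> (1 - K / (3 * lam)) * real n \<longrightarrow>
          resolvable_on S
            (\<lambda>i j. (lam * l i * l j / sqrt (real n) + E (i, j)) * (l i * l j))
            (0.5 * K * sqrt (real n))
            (1.1 * sqrt (real n) * (\<theta> + (real n - real (card S)) / real n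
                 + 10^4 * max 0 (\<kappa> - lam) / real n))}
     \<ge> 1 - exp (- 10 * \<kappa>) - 2 / (real n)^2"
  (is "measure ?M ?A \<ge> _")
proof -
  interpret prob_space ?M by (rule prob_space_gaussian_matrix_space)
  have A: "?A \<in> sets ?M"
    by (rule sets_resolvable_on_all) auto
  consider "n = 0" | "\<kappa> \<le> 0" | "n \<ge> 1" "\<kappa> > 0" by linarith
  then show ?thesis
  proof cases
    case 1
    then have "?A = space ?M" by (auto simp: resolvable_on_def)
    then have "prob ?A = 1" by (simp add: prob_space)
    then show ?thesis using 1 by simp
  next
    case 2
    then have "1 \<le> exp (- 10 * \<kappa>)" by simp
    moreover have "0 \<le> 2 / (real n)\<^sup>2" by simp
    ultimately show ?thesis using measure_nonneg[of ?M ?A] by linarith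
  next
    case 3
    define \<mu> where "\<mu> = max 0 (\<kappa> - lam)"
    have \<theta>: "\<theta> \<ge> 0" and \<mu>: "\<mu> \<ge> 0" unfolding \<theta>_def \<mu>_def by simp_all
    obtain B where B: "B \<in> sets ?M" "prob B \<le> 1 / (real n)\<^sup>2"
      and block: "\<And>E. E \<in> space ?M - B \<Longrightarrow> block_sums_bounded n l K E"
      using block_sums_bounded_whp[OF 3(1) K_ge l_pm] by blast
    obtain C where C: "C \<in> sets ?M"
      "prob C \<le> exp (- (lam - K) * (\<theta> * real n + 10^4 * \<mu>)) * ((1 + exp (- (lam - K)\<^sup>2 / 2)) ^ n - 1)"
      and row: "\<And>E. E \<in> space ?M - C \<Longrightarrow> row_sums_bounded n l (lam - K) (\<theta> * real n + 10^4 * \<mu>) E"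
      using row_sums_bounded_whp[of "lam - K" "\<theta> * real n + 10^4 * \<mu>" n l] K_ge lam_ge \<theta> \<mu> l_pm by auto
    have "space ?M - (B \<union> C) \<subseteq> ?A"
      using resolvable_on_if_sums_bounded[OF 3(1) l_pm K_ge lam_ge \<theta> \<mu> block row] unfolding \<mu>_def by blast
    then have "1 - prob B - prob C \<le> prob ?A" by (rule prob_ge_if_compl_subset_Un[OF A B(1) C(1)])
    moreover have "prob C \<le> exp (- 10 * \<kappa>)"
      using C(2) row_union_bound_le[OF K_ge lam_ge 3(2), of n] unfolding \<theta>_def \<mu>_def by simp
    moreover have "1 / (real n)\<^sup>2 \<le> 2 / (real n)\<^sup>2" by (simp add: divide_right_mono)
    ultimately show ?thesis using B(2) by linarith
  qed
qed

end
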